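(* Let $I\subseteq\mathbb{R}$ be an interval and let $f:I\to\mathbb{R}$ be convex on $I^{\circ}$, the interior of $I$. Let $a,b\in I^{\circ}$ with $a<b$, and suppose $f'\in L[a,b]$. If $f(a)f(b)>0$ and $\int_a^b f(t)\,dt=0$, then $$f(a)f(b)\le \frac{b-a}{12}\int_a^b f'(x)^2\,dx .$$ Moreover, the constant $\frac{b-a}{12}$ is best possible: it cannot be replaced by a smaller constant such that the inequality remains valid for all functions satisfying the hypotheses.
   Context: $L[a,b]$ denotes the space of Lebesgue integrable functions on $[a,b]$. A convex function on an open interval is differentiable almost everywhere, so $f'$ is defined a.e. on $[a,b]$. *)

theory Defs
  imports "HOL-Analysis.Analysis"
begin

definition thm3_hyps ::
  "real set \<Rightarrow> (real \<Rightarrow> real) \<Rightarrow> (real \<Rightarrow> real) \<Rightarrow> real \<Rightarrow> real \<Rightarrow> bool" where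
  "thm3_hyps I f f' a b \<longleftrightarrow>
     is_interval I \<and> convex_on (interior I) f \<and>
     a \<in> interior I \<and> b \<in> interior I \<and> a < b \<and>
     (AE x in lborel. x \<in> {a..b} \<longrightarrow> (f has_real_derivative f' x) (at x)) \<and>
     set_integrable lborel {a..b} f' \<and>
     f a * f b > 0 \<and>
     (LINT t:{a..b}|lborel. f t) = 0"

end

theory Submission
  imports Defs "HOL-Real_Asymp.Real_Asymp"
begin

text \<open>Let \<open>m\<close> be the midpoint of \<open>[a, b]\<close>. Integrating by parts against the weight \<open>x - m\<close> and
  using \<open>\<integral>f = 0\<close> gives \<open>\<integral> f'(x) (x - m) = (b - a) (f a + f b) / 2\<close>; Cauchy-Schwarz with
  \<open>\<integral> (x - m)\<^sup>2 = (b - a)\<^sup>3 / 12\<close> then yields \<open>\<integral> f'\<^sup>2 \<ge> 3 (f a + f b)\<^sup>2 / (b - a)\<close>, and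
  \<open>f a f b \<le> (f a + f b)\<^sup>2 / 4\<close> finishes the inequality. As \<open>f'\<close> is only an a.e. derivative, the integration by parts is obtained as a limit
  of the same identity for the difference quotients of \<open>f\<close>, which convexity bounds uniformly,
  so that bounded convergence applies. Equality holds for the parabola \<open>(x - m)\<^sup>2 - (b - a)\<^sup>2 / 12\<close>.\<close>

lemma set_integral_Icc_FTC:
  fixes F g :: "real \<Rightarrow> real"
  assumes "a \<le> b"
    and "\<And>x. x \<in> {a..b} \<Longrightarrow> (F has_real_derivative g x) (at x within {a..b})"
    and "continuous_on {a..b} g"
  shows "(LINT x:{a..b}|lborel. g x) = F b - F a"
proof -
  have "set_integrable lborel {a..b} g"
    unfolding set_integrable_def by (rule borel_integrable_compact) (auto simp: assms)
  moreover have "(g has_integral (F b - F a)) {a..b}"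
    by (rule fundamental_theorem_of_calculus)
      (use assms in \<open>auto simp: has_real_derivative_iff_has_vector_derivative\<close>)
  ultimately show ?thesis
    using set_borel_integral_eq_integral(2) integral_unique by metis
qed

lemma integral_has_real_derivative_at:
  fixes f :: "real \<Rightarrow> real"
  assumes "continuous_on {c..d} f" "u \<in> {c<..<d}"
  shows "((\<lambda>u. integral {c..u} f) has_real_derivative f u) (at u)"
proof -
  have "u \<in> interior {c..d}" using assms(2) by simp
  moreover have "u \<in> {c..d}" using assms(2) by simp
  ultimately show ?thesis
    using integral_has_real_derivative[OF assms(1)] at_within_interior by metis
qed

lemma DERIV_imp_difference_quotient_LIMSEQ:
  fixes \<phi> :: "real \<Rightarrow> real"
  assumes "(\<phi> has_real_derivative D) (at c)" "h \<longlonglongrightarrow> 0" "\<And>n. h n \<noteq> 0"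
  shows "(\<lambda>n. (\<phi> (c + h n) - \<phi> c) / h n) \<longlonglongrightarrow> D"
proof -
  have "((\<lambda>k. (\<phi> (c + k) - \<phi> c) / k) \<longlongrightarrow> D) (at 0)"
    using assms(1) by (simp add: DERIV_def)
  moreover have "filterlim h (at 0) sequentially"
    using assms(2,3) by (simp add: filterlim_at)
  ultimately show ?thesis by (rule filterlim_compose)
qed

lemma set_integral_Icc_bounded_convergence:
  fixes s :: "nat \<Rightarrow> real \<Rightarrow> real" and g :: "real \<Rightarrow> real"
  assumes g: "set_borel_measurable lborel {a..b} g"
    and s: "\<And>n. set_borel_measurable lborel {a..b} (s n)"
    and bound: "\<And>n x. x \<in> {a..b} \<Longrightarrow> \<bar>s n x\<bar> \<le> K"
    and lim: "AE x in lborel. x \<in> {a..b} \<longrightarrow> (\<lambda>n. s n x) \<longlonglongrightarrow> g x"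
  shows "set_integrable lborel {a..b} g"
    and "(\<lambda>n. LINT x:{a..b}|lborel. s n x) \<longlonglongrightarrow> (LINT x:{a..b}|lborel. g x)"
proof -
  have w: "integrable lborel (\<lambda>x. indicator {a..b} x *\<^sub>R K)"
    by (rule borel_integrable_compact) auto
  have lim': "AE x in lborel. (\<lambda>n. indicator {a..b} x *\<^sub>R s n x) \<longlonglongrightarrow> indicator {a..b} x *\<^sub>R g x"
    using lim by eventually_elim (auto split: split_indicator)
  have bound': "AE x in lborel. norm (indicator {a..b} x *\<^sub>R s n x) \<le> indicator {a..b} x *\<^sub>R K" for n
    using bound by (intro AE_I2) (auto split: split_indicator)
  show "set_integrable lborel {a..b} g"
    using g s unfolding set_borel_measurable_def set_integrable_def
    by (rule integrable_dominated_convergence[OF _ _ w lim' bound'])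
  show "(\<lambda>n. LINT x:{a..b}|lborel. s n x) \<longlonglongrightarrow> (LINT x:{a..b}|lborel. g x)"
    using g s unfolding set_borel_measurable_def set_lebesgue_integral_def
    by (rule integral_dominated_convergence[OF _ _ w lim' bound'])
qed

lemma convex_on_slope_mono:
  fixes f :: "real \<Rightarrow> real"
  assumes f: "convex_on J f" and J: "p \<in> J" "q \<in> J" "p' \<in> J" "q' \<in> J"
    and o: "p < q" "p' < q'" "p \<le> p'" "q \<le> q'"
  shows "(f q - f p) / (q - p) \<le> (f q' - f p') / (q' - p')"
proof -
  have "(f q - f p) / (q - p) \<le> (f q' - f p) / (q' - p)"
  proof (cases "q = q'")
    case False
    then have "p < q" "q < q'" using o by auto
    from convex_on_slope_le(1)[OF f J(1) J(4) this] show ?thesis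
      by (smt (verit, ccfv_threshold) minus_divide_divide)
  qed simp
  also have "\<dots> \<le> (f q' - f p') / (q' - p')"
  proof (cases "p = p'")
    case False
    then have "p < p'" "p' < q'" using o by auto
    from convex_on_slope_le(2)[OF f J(1) J(4) this] show ?thesis
      by (smt (verit, ccfv_threshold) minus_divide_divide)
  qed simp
  finally show ?thesis .
qed

lemma convex_on_difference_quotient_bounds:
  fixes f :: "real \<Rightarrow> real"
  assumes "convex_on {p..q} f" "p < a" "a \<le> x" "0 < h" "x + h \<le> e" "e < q"
  shows "(f a - f p) / (a - p) \<le> (f (x + h) - f x) / h"
    and "(f (x + h) - f x) / h \<le> (f q - f e) / (q - e)"
  using convex_on_slope_mono[OF assms(1), of p a x "x + h"]
    convex_on_slope_mono[OF assms(1), of x "x + h" e q] assms by auto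

lemma continuous_on_difference_quotient:
  fixes f :: "real \<Rightarrow> real"
  assumes "continuous_on {a-\<eta>..b+\<eta>} f" "0 < h" "h \<le> \<eta>"
  shows "continuous_on {a..b} (\<lambda>x. (f (x + h) - f x) / h)"
proof -
  have "continuous_on {a..b} (\<lambda>x. f (x + h))"
    by (rule continuous_on_compose2[OF assms(1)]) (use assms in \<open>auto intro!: continuous_intros\<close>)
  moreover have "continuous_on {a..b} f"
    by (rule continuous_on_subset[OF assms(1)]) (use assms in auto)
  ultimately show ?thesis by (intro continuous_intros) (use assms in auto)
qed

lemma difference_quotient_moment_tendsto:
  fixes f :: "real \<Rightarrow> real"
  assumes cont: "continuous_on {a-\<eta>..b+\<eta>} f" and "a \<le> b" "0 < \<eta>"
    and h: "h \<longlonglongrightarrow> 0" "\<And>n. 0 < h n" "\<And>n. h n < \<eta>"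
  shows "(\<lambda>n. LINT x:{a..b}|lborel. (f (x + h n) - f x) / h n * (x - m))
           \<longlonglongrightarrow> f b * (b - m) - f a * (a - m) - (LINT x:{a..b}|lborel. f x)"
proof -
  define g where "g u = f u * (u - m)" for u
  define F where "F u = integral {a-\<eta>..u} f" for u
  define G where "G u = integral {a-\<eta>..u} g" for u
  have "continuous_on {a-\<eta>..b+\<eta>} g"
    unfolding g_def by (intro continuous_intros cont)
  then have dF: "(F has_real_derivative f u) (at u)"
    and dG: "(G has_real_derivative g u) (at u)" if "u \<in> {a-\<eta><..<b+\<eta>}" for u
    unfolding F_def G_def using integral_has_real_derivative_at[OF _ that] cont by auto
  have inside: "x \<in> {a-\<eta><..<b+\<eta>}" "x + h n \<in> {a-\<eta><..<b+\<eta>}" if "x \<in> {a..b}" for x n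
    using that h(2,3)[of n] \<open>0 < \<eta>\<close> by auto
  \<comment> \<open>\<open>P n\<close> is an antiderivative of the integrand: \<open>f (x + h) (x - m) = g (x + h) - h f (x + h)\<close>.\<close>
  define P where "P n x = (G (x + h n) - G x) / h n - F (x + h n)" for n x
  have int_eq: "(LINT x:{a..b}|lborel. (f (x + h n) - f x) / h n * (x - m)) = P n b - P n a" for n
  proof (rule set_integral_Icc_FTC)
    fix x assume x: "x \<in> {a..b}"
    have "(P n has_real_derivative (g (x + h n) - g x) / h n - f (x + h n)) (at x)"
      unfolding P_def using dG[OF inside(1)[OF x]] dG[OF inside(2)[OF x]] dF[OF inside(2)[OF x]] h(2)[of n]
      by (auto intro!: derivative_eq_intros simp: DERIV_shift)
    moreover have "(g (x + h n) - g x) / h n - f (x + h n) = (f (x + h n) - f x) / h n * (x - m)"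
      using h(2)[of n] unfolding g_def by (simp add: field_simps)
    ultimately show "(P n has_real_derivative (f (x + h n) - f x) / h n * (x - m)) (at x within {a..b})"
      using has_field_derivative_at_within by metis
  next
    show "continuous_on {a..b} (\<lambda>x. (f (x + h n) - f x) / h n * (x - m))"
      using continuous_on_difference_quotient[OF cont h(2) less_imp_le[OF h(3)]]
      by (rule continuous_on_mult) (auto intro: continuous_intros)
  qed (use \<open>a \<le> b\<close> in auto)
  have P_lim: "(\<lambda>n. P n c) \<longlonglongrightarrow> g c - F c" if "c \<in> {a-\<eta><..<b+\<eta>}" for c
  proof -
    have "(\<lambda>n. c + h n) \<longlonglongrightarrow> c"
      using tendsto_add[OF tendsto_const h(1), of c] by simp
    then have "(\<lambda>n. F (c + h n)) \<longlonglongrightarrow> F c"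
      by (rule isCont_tendsto_compose[OF DERIV_isCont[OF dF[OF that]]])
    then show ?thesis
      unfolding P_def using DERIV_imp_difference_quotient_LIMSEQ[OF dG[OF that] h(1)] h(2)
      by (intro tendsto_diff) (auto simp: less_imp_neq[symmetric])
  qed
  have "(LINT x:{a..b}|lborel. f x) = F b - F a"
  proof (rule set_integral_Icc_FTC)
    show "continuous_on {a..b} f"
      by (rule continuous_on_subset[OF cont]) (use \<open>0 < \<eta>\<close> in auto)
  qed (use \<open>a \<le> b\<close> dF inside(1) has_field_derivative_at_within in blast)+
  moreover have "(\<lambda>n. P n b - P n a) \<longlonglongrightarrow> (g b - F b) - (g a - F a)"
    using P_lim inside(1) \<open>a \<le> b\<close> by (intro tendsto_diff) auto
  moreover have "(g b - F b) - (g a - F a) = f b * (b - m) - f a * (a - m) - (F b - F a)"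
    unfolding g_def by simp
  ultimately show ?thesis
    unfolding int_eq by simp
qed

lemma convex_on_difference_quotient_bounded:
  fixes f :: "real \<Rightarrow> real"
  assumes convex: "convex_on {c<..<d} f" and "c < a" "b < d"
  obtains \<eta> K where "0 < \<eta>" "{a-\<eta>..b+\<eta>} \<subseteq> {c<..<d}"
    and "\<And>x h. x \<in> {a..b} \<Longrightarrow> 0 < h \<Longrightarrow> h \<le> \<eta> / 2 \<Longrightarrow> \<bar>(f (x + h) - f x) / h\<bar> \<le> K"
proof -
  define \<eta> where "\<eta> = min (a - c) (d - b) / 2"
  have "0 < \<eta>" "c < a - \<eta>" "b + \<eta> < d"
    using assms unfolding \<eta>_def by (auto simp: min_def field_simps)
  then have \<eta>: "0 < \<eta>" "{a-\<eta>..b+\<eta>} \<subseteq> {c<..<d}"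
    by auto
  have convex': "convex_on {a-\<eta>..b+\<eta>} f"
    using convex_on_subset[OF convex \<eta>(2)] by simp
  define lo where "lo = (f a - f (a - \<eta>)) / (a - (a - \<eta>))"
  define hi where "hi = (f (b + \<eta>) - f (b + \<eta>/2)) / (b + \<eta> - (b + \<eta>/2))"
  have "\<bar>(f (x + h) - f x) / h\<bar> \<le> \<bar>lo\<bar> + \<bar>hi\<bar>"
    if "x \<in> {a..b}" "0 < h" "h \<le> \<eta> / 2" for x h
  proof -
    have "a - \<eta> < a" "a \<le> x" "x + h \<le> b + \<eta>/2" "b + \<eta>/2 < b + \<eta>"
      using that \<eta>(1) by auto
    from convex_on_difference_quotient_bounds[OF convex' this(1,2) that(2) this(3,4)]
    have "lo \<le> (f (x + h) - f x) / h" "(f (x + h) - f x) / h \<le> hi"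
      unfolding lo_def hi_def by simp_all
    then show ?thesis by arith
  qed
  with \<eta> that show ?thesis by blast
qed

lemma set_borel_measurable_mult:
  fixes f g :: "'a \<Rightarrow> real"
  assumes "set_borel_measurable M A f" "set_borel_measurable M A g"
  shows "set_borel_measurable M A (\<lambda>x. f x * g x)"
proof -
  have "(\<lambda>x. (indicator A x *\<^sub>R f x) * (indicator A x *\<^sub>R g x)) \<in> borel_measurable M"
    using assms unfolding set_borel_measurable_def by measurable
  moreover have "(\<lambda>x. (indicator A x *\<^sub>R f x) * (indicator A x *\<^sub>R g x))
                   = (\<lambda>x. indicator A x *\<^sub>R (f x * g x))"
    by (auto simp: fun_eq_iff indicator_def)
  ultimately show ?thesis
    unfolding set_borel_measurable_def by simp
qed

lemma set_borel_measurable_continuous_on_Icc: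
  fixes g :: "real \<Rightarrow> real"
  assumes "continuous_on {a..b} g"
  shows "set_borel_measurable lborel {a..b} g"
  using set_measurable_continuous_on[OF _ assms] unfolding set_borel_measurable_def by simp

lemma set_integral_Icc_moment_bounded_convergence:
  fixes Q :: "nat \<Rightarrow> real \<Rightarrow> real" and u :: "real \<Rightarrow> real"
  assumes meas: "set_borel_measurable lborel {a..b} u"
    and cont: "\<And>n. continuous_on {a..b} (Q n)"
    and bounded: "\<And>n x. x \<in> {a..b} \<Longrightarrow> \<bar>Q n x\<bar> \<le> K"
    and lim: "AE x in lborel. x \<in> {a..b} \<longrightarrow> (\<lambda>n. Q n x) \<longlonglongrightarrow> u x"
  shows "set_integrable lborel {a..b} (\<lambda>x. (u x)\<^sup>2)"
    and "set_integrable lborel {a..b} (\<lambda>x. u x * (x - m))"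
    and "(\<lambda>n. LINT x:{a..b}|lborel. Q n x * (x - m)) \<longlonglongrightarrow> (LINT x:{a..b}|lborel. u x * (x - m))"
proof -
  have Q_meas: "set_borel_measurable lborel {a..b} (\<lambda>x. Q n x * (x - m))"
    and Q2_meas: "set_borel_measurable lborel {a..b} (\<lambda>x. (Q n x)\<^sup>2)" for n
    by (intro set_borel_measurable_continuous_on_Icc continuous_intros cont)+
  have "set_borel_measurable lborel {a..b} (\<lambda>x. x - m)"
    by (intro set_borel_measurable_continuous_on_Icc continuous_intros)
  then have u_meas: "set_borel_measurable lborel {a..b} (\<lambda>x. u x * (x - m))"
    by (rule set_borel_measurable_mult[OF meas])
  have u2_meas: "set_borel_measurable lborel {a..b} (\<lambda>x. (u x)\<^sup>2)"
    unfolding power2_eq_square by (rule set_borel_measurable_mult[OF meas meas])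
  have bound1: "\<bar>Q n x * (x - m)\<bar> \<le> K * (\<bar>a - m\<bar> + \<bar>b - m\<bar>)" if "x \<in> {a..b}" for n x
    unfolding abs_mult using bounded[OF that] order_trans[OF abs_ge_zero bounded[OF that]] that
    by (intro mult_mono) (auto simp: abs_le_iff)
  have bound2: "\<bar>(Q n x)\<^sup>2\<bar> \<le> K\<^sup>2" if "x \<in> {a..b}" for n x
  proof -
    have "\<bar>Q n x\<bar>\<^sup>2 \<le> K\<^sup>2"
      by (rule power_mono[OF bounded[OF that]]) simp
    then show ?thesis by simp
  qed
  have lim1: "AE x in lborel. x \<in> {a..b} \<longrightarrow> (\<lambda>n. Q n x * (x - m)) \<longlonglongrightarrow> u x * (x - m)"
    using lim by eventually_elim (auto intro: tendsto_mult_right)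
  have lim2: "AE x in lborel. x \<in> {a..b} \<longrightarrow> (\<lambda>n. (Q n x)\<^sup>2) \<longlonglongrightarrow> (u x)\<^sup>2"
    using lim by eventually_elim (auto intro: tendsto_power)
  show "set_integrable lborel {a..b} (\<lambda>x. (u x)\<^sup>2)"
    by (rule set_integral_Icc_bounded_convergence(1)[OF u2_meas Q2_meas bound2 lim2])
  note moment = set_integral_Icc_bounded_convergence[OF u_meas Q_meas bound1 lim1]
  show "set_integrable lborel {a..b} (\<lambda>x. u x * (x - m))"
    by (rule moment(1))
  show "(\<lambda>n. LINT x:{a..b}|lborel. Q n x * (x - m)) \<longlonglongrightarrow> (LINT x:{a..b}|lborel. u x * (x - m))"
    by (rule moment(2))
qed

lemma convex_on_integral_deriv_moment:
  fixes f f' :: "real \<Rightarrow> real"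
  assumes convex: "convex_on {c<..<d} f" and ab: "c < a" "a \<le> b" "b < d"
    and deriv: "AE x in lborel. x \<in> {a..b} \<longrightarrow> (f has_real_derivative f' x) (at x)"
    and meas: "set_borel_measurable lborel {a..b} f'"
  shows "set_integrable lborel {a..b} (\<lambda>x. (f' x)\<^sup>2)"
    and "set_integrable lborel {a..b} (\<lambda>x. f' x * (x - m))"
    and "(LINT x:{a..b}|lborel. f' x * (x - m))
           = f b * (b - m) - f a * (a - m) - (LINT x:{a..b}|lborel. f x)"
proof -
  obtain \<eta> K where \<eta>: "0 < \<eta>" "{a-\<eta>..b+\<eta>} \<subseteq> {c<..<d}"
    and bounded: "\<And>x h. x \<in> {a..b} \<Longrightarrow> 0 < h \<Longrightarrow> h \<le> \<eta> / 2 \<Longrightarrow> \<bar>(f (x + h) - f x) / h\<bar> \<le> K"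
    using convex_on_difference_quotient_bounded[OF convex ab(1,3)] by blast
  have cont: "continuous_on {a-\<eta>..b+\<eta>} f"
    using convex_on_continuous[OF open_greaterThanLessThan convex] \<eta>(2) continuous_on_subset by blast
  define h :: "nat \<Rightarrow> real" where "h n = \<eta> / (real n + 2)" for n
  have h_lim: "h \<longlonglongrightarrow> 0"
    unfolding h_def by real_asymp
  have h_pos: "0 < h n" and h_le: "h n \<le> \<eta> / 2" for n
    using \<eta>(1) unfolding h_def by (auto simp: field_simps)
  define Q where "Q n x = (f (x + h n) - f x) / h n" for n x
  have Q_cont: "continuous_on {a..b} (Q n)" for n
    unfolding Q_def using continuous_on_difference_quotient[OF cont h_pos] h_le[of n] \<eta>(1) by simp
  have Q_bound: "\<bar>Q n x\<bar> \<le> K" if "x \<in> {a..b}" for n x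
    unfolding Q_def by (rule bounded[OF that h_pos h_le])
  have Q_lim: "AE x in lborel. x \<in> {a..b} \<longrightarrow> (\<lambda>n. Q n x) \<longlonglongrightarrow> f' x"
    using deriv by eventually_elim
      (use DERIV_imp_difference_quotient_LIMSEQ[OF _ h_lim] h_pos in \<open>auto simp: Q_def less_imp_neq[symmetric]\<close>)
  note limits = set_integral_Icc_moment_bounded_convergence[OF meas Q_cont Q_bound Q_lim]
  show "set_integrable lborel {a..b} (\<lambda>x. (f' x)\<^sup>2)"
    by (rule limits(1))
  show "set_integrable lborel {a..b} (\<lambda>x. f' x * (x - m))"
    by (rule limits(2))
  have "h n < \<eta>" for n
    using h_le[of n] \<eta>(1) by linarith
  from difference_quotient_moment_tendsto[OF cont ab(2) \<eta>(1) h_lim h_pos this, of m]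
  show "(LINT x:{a..b}|lborel. f' x * (x - m))
          = f b * (b - m) - f a * (a - m) - (LINT x:{a..b}|lborel. f x)"
    using limits(3)[of m] LIMSEQ_unique unfolding Q_def by blast
qed

lemma set_integral_square_ge_moment:
  fixes u :: "real \<Rightarrow> real" and a b :: real
  defines "m \<equiv> (a + b) / 2"
  assumes "a < b"
    and sq: "set_integrable lborel {a..b} (\<lambda>x. (u x)\<^sup>2)"
    and mom: "set_integrable lborel {a..b} (\<lambda>x. u x * (x - m))"
  shows "12 * (LINT x:{a..b}|lborel. u x * (x - m))\<^sup>2 / (b - a)^3
           \<le> (LINT x:{a..b}|lborel. (u x)\<^sup>2)"
proof -
  define L where "L = b - a"
  define M where "M = (LINT x:{a..b}|lborel. u x * (x - m))"
  define c where "c = 12 * M / L^3"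
  have L: "0 < L" using \<open>a < b\<close> unfolding L_def by simp
  have "(LINT x:{a..b}|lborel. (x - m)\<^sup>2) = (b - m)^3/3 - (a - m)^3/3"
    by (rule set_integral_Icc_FTC)
      (use \<open>a < b\<close> in \<open>auto intro!: derivative_eq_intros continuous_intros
        simp: power2_eq_square simp del: power_Suc\<close>)
  also have "\<dots> = L^3/12"
    unfolding m_def L_def by (simp add: field_simps power3_eq_cube)
  finally have var: "(LINT x:{a..b}|lborel. (x - m)\<^sup>2) = L^3/12" .
  have "set_integrable lborel {a..b} (\<lambda>x. (x - m)\<^sup>2)"
    unfolding set_integrable_def by (rule borel_integrable_compact) (auto intro!: continuous_intros)
  then have "set_integrable lborel {a..b} (\<lambda>x. c\<^sup>2 * (x - m)\<^sup>2)"
    and mom': "set_integrable lborel {a..b} (\<lambda>x. 2 * c * (u x * (x - m)))"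
    using mom by simp_all
  then have "(LINT x:{a..b}|lborel. (u x)\<^sup>2 - 2 * c * (u x * (x - m)) + c\<^sup>2 * (x - m)\<^sup>2)
               = (LINT x:{a..b}|lborel. (u x)\<^sup>2) - 2 * c * M + c\<^sup>2 * (L^3/12)"
    using set_integral_add(2)[OF set_integral_diff(1)[OF sq mom']] set_integral_diff(2)[OF sq mom'] var
    unfolding M_def by simp
  moreover have "0 \<le> (LINT x:{a..b}|lborel. (u x)\<^sup>2 - 2 * c * (u x * (x - m)) + c\<^sup>2 * (x - m)\<^sup>2)"
  proof -
    have "(u x)\<^sup>2 - 2 * c * (u x * (x - m)) + c\<^sup>2 * (x - m)\<^sup>2 = (u x - c * (x - m))\<^sup>2" for x
      by (simp add: power2_eq_square algebra_simps)
    then show ?thesis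
      unfolding set_lebesgue_integral_def by (intro integral_nonneg_AE) (simp add: indicator_def)
  qed
  moreover have "2 * c * M - c\<^sup>2 * (L^3/12) = 12 * M\<^sup>2 / L^3"
    using L unfolding c_def by (simp add: field_simps power2_eq_square power3_eq_cube)
  ultimately show ?thesis
    unfolding M_def L_def by linarith
qed

lemma open_convex_interval_between:
  fixes J :: "real set"
  assumes "open J" "convex J" "a \<in> J" "b \<in> J" "a \<le> b"
  obtains c d where "c < a" "b < d" "{c<..<d} \<subseteq> J"
proof -
  obtain e1 where "0 < e1" "ball a e1 \<subseteq> J" using assms openE by blast
  then have c: "a - e1/2 \<in> J" by (auto simp: dist_real_def)
  obtain e2 where "0 < e2" "ball b e2 \<subseteq> J" using assms openE by blast
  then have d: "b + e2/2 \<in> J" by (auto simp: dist_real_def)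
  have "{a - e1/2 .. b + e2/2} \<subseteq> J"
    using atMostAtLeast_subset_convex[OF assms(2) c d] \<open>0 < e1\<close> \<open>0 < e2\<close> \<open>a \<le> b\<close> by simp
  then show ?thesis
    using that[of "a - e1/2" "b + e2/2"] \<open>0 < e1\<close> \<open>0 < e2\<close> by force
qed

lemma thm3_hyps_imp_inequality:
  assumes "thm3_hyps I f f' a b"
  shows "f a * f b \<le> (b - a) / 12 * (LINT x:{a..b}|lborel. (f' x)\<^sup>2)"
proof -
  define m where "m = (a + b) / 2"
  define S where "S = f a + f b"
  note H = assms[unfolded thm3_hyps_def]
  have "convex (interior I)"
    using H by (simp add: is_interval_convex)
  then obtain c d where cd: "c < a" "b < d" "{c<..<d} \<subseteq> interior I"
    using open_convex_interval_between[of "interior I" a b] H by auto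
  have convex: "convex_on {c<..<d} f"
    using convex_on_subset[OF _ cd(3)] H by blast
  have meas: "set_borel_measurable lborel {a..b} f'"
    using H unfolding set_integrable_def set_borel_measurable_def by auto
  have ab: "a \<le> b"
    and deriv: "AE x in lborel. x \<in> {a..b} \<longrightarrow> (f has_real_derivative f' x) (at x)"
    using H by auto
  note by_parts = convex_on_integral_deriv_moment(1)[OF convex cd(1) ab cd(2) deriv meas]
    convex_on_integral_deriv_moment(2,3)[where m = m, OF convex cd(1) ab cd(2) deriv meas]
  have "12 * (LINT x:{a..b}|lborel. f' x * (x - m))\<^sup>2 / (b - a)^3
          \<le> (LINT x:{a..b}|lborel. (f' x)\<^sup>2)"
    using set_integral_square_ge_moment[of a b f'] by_parts(1,2) H unfolding m_def by simp
  moreover have "(LINT x:{a..b}|lborel. f' x * (x - m)) = (b - a) * S / 2"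
    using by_parts(3) H unfolding m_def S_def by (simp add: field_simps)
  moreover have "12 * (L * S / 2)\<^sup>2 / L^3 = 3 * S\<^sup>2 / L" if "0 < L" for L :: real
    using that by (simp add: power2_eq_square power3_eq_cube field_simps)
  ultimately have "3 * S\<^sup>2 / (b - a) \<le> (LINT x:{a..b}|lborel. (f' x)\<^sup>2)"
    using H by simp
  moreover have "f a * f b \<le> L / 12 * A" if "0 < L" "3 * S\<^sup>2 / L \<le> A" for L A :: real
  proof -
    have "f a * f b \<le> S\<^sup>2 / 4"
      using sum_squares_ge_zero[of "f a - f b" 0] unfolding S_def
      by (simp add: power2_eq_square field_simps)
    also have "\<dots> = L / 12 * (3 * S\<^sup>2 / L)"
      using that(1) by simp
    also have "\<dots> \<le> L / 12 * A"
      using that by (intro mult_left_mono) auto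
    finally show ?thesis .
  qed
  ultimately show ?thesis
    using H by simp
qed

lemma thm3_constant_optimal:
  assumes "a < b" "C < (b - a) / 12"
  shows "\<exists>I f f'. thm3_hyps I f f' a b \<and>
           \<not> f a * f b \<le> C * (LINT x:{a..b}|lborel. (f' x)\<^sup>2)"
proof -
  define m where "m = (a + b) / 2"
  define L where "L = b - a"
  have L: "0 < L" using assms unfolding L_def by simp
  define f where "f x = (x - m)\<^sup>2 - L\<^sup>2/12" for x :: real
  define f' where "f' x = 2 * (x - m)" for x :: real
  have deriv: "(f has_real_derivative f' x) (at x)" for x
    unfolding f_def[abs_def] f'_def by (auto intro!: derivative_eq_intros)
  then have "convex_on UNIV f"
    by (intro convex_on_realI[where f'=f']) (auto simp: f'_def)
  have f_ab: "f a = L\<^sup>2/6" "f b = L\<^sup>2/6"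
    unfolding f_def m_def L_def by (simp_all add: field_simps power2_eq_square)
  have "(LINT t:{a..b}|lborel. f t) = ((b-m)^3/3 - L\<^sup>2/12*b) - ((a-m)^3/3 - L\<^sup>2/12*a)"
    by (rule set_integral_Icc_FTC[where F="\<lambda>x. (x-m)^3/3 - L\<^sup>2/12*x"])
      (use assms in \<open>auto intro!: derivative_eq_intros continuous_intros
        simp: f_def power2_eq_square simp del: power_Suc\<close>)
  then have mean_zero: "(LINT t:{a..b}|lborel. f t) = 0"
    unfolding m_def L_def by (simp add: field_simps power3_eq_cube power2_eq_square)
  have "(LINT x:{a..b}|lborel. (f' x)\<^sup>2) = 4*(b-m)^3/3 - 4*(a-m)^3/3"
    by (rule set_integral_Icc_FTC[where F="\<lambda>x. 4*(x-m)^3/3"])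
      (use assms in \<open>auto intro!: derivative_eq_intros continuous_intros
        simp: f'_def power2_eq_square field_simps simp del: power_Suc\<close>)
  then have energy: "(LINT x:{a..b}|lborel. (f' x)\<^sup>2) = L^3/3"
    unfolding m_def L_def by (simp add: field_simps power3_eq_cube)
  have "set_integrable lborel {a..b} f'"
    unfolding set_integrable_def
    by (rule borel_integrable_compact) (auto simp: f'_def intro!: continuous_intros)
  then have hyps: "thm3_hyps UNIV f f' a b"
    unfolding thm3_hyps_def using assms \<open>convex_on UNIV f\<close> deriv mean_zero L by (auto simp: f_ab)
  have "C * (L^3/3) < (L/12) * (L^3/3)"
    using assms L unfolding L_def by (intro mult_strict_right_mono) auto
  also have "\<dots> = f a * f b"
    unfolding f_ab by (simp add: field_simps power2_eq_square power3_eq_cube)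
  finally have "\<not> f a * f b \<le> C * (LINT x:{a..b}|lborel. (f' x)\<^sup>2)"
    unfolding energy by simp
  with hyps show ?thesis by blast
qed

theorem theorem3:
  shows "(\<forall>I f f' a b. thm3_hyps I f f' a b \<longrightarrow>
            f a * f b \<le> (b - a) / 12 * (LINT x:{a..b}|lborel. (f' x)\<^sup>2))
       \<and> (\<forall>a b. a < b \<longrightarrow> (\<forall>C. C < (b - a) / 12 \<longrightarrow>
            (\<exists>I f f'. thm3_hyps I f f' a b \<and>
               \<not> (f a * f b \<le> C * (LINT x:{a..b}|lborel. (f' x)\<^sup>2)))))"
  using thm3_hyps_imp_inequality thm3_constant_optimal by blast

end
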